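(* For continuous functions defined using arithmetic circuits, the sequence of fixpoints along the path given by the linear homotopy $\mathcal{F}_t=(1-t)\mathcal{F}_0+t\mathcal{F}_1$ can have exponentially many alternations of the value of $t$: there are, for each $n$, continuous functions $\mathcal{F}_0,\mathcal{F}_1:[0,1]^3\to[0,1]^3$ computed by linear arithmetic circuits of size polynomial in $n$, with $\mathcal{F}_0$ having a unique fixpoint, such that along the path of fixpoints of $\mathcal{F}_t$ starting at the fixpoint of $\mathcal{F}_0$ (at $t=0$) and ending at a fixpoint of $\mathcal{F}_1$ (at $t=1$), the parameter $t$ changes direction a number of times exponential in $n$.
   Context: A linear arithmetic circuit computes a function $[0,1]^3\to[0,1]^3$ using gates whose inputs and outputs lie in $[0,1]$ (results truncated to $[0,1]$): sum, difference, max, min of two inputs, multiplication of an input by a constant, constants, and comparator gates (output $1$ if first input exceeds second, $0$ if smaller, arbitrary if equal). The path of fixpoints is a connected set of pairs $(x,t)$ with $\mathcal{F}_t(x)=x$. *)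

theory Defs
  imports "HOL-Analysis.Analysis"
begin

text \<open>Linear arithmetic circuits with three inputs (nodes 0,1,2) and gates
  numbered 3,4,...; gate number k (0-based in the gate list) is node 3+k and may
  only refer to nodes of smaller index.\<close>

datatype gate =
    GAdd nat nat
  | GSub nat nat
  | GMax nat nat
  | GMin nat nat
  | GScale rat nat
  | GConst rat
  | GCmp nat nat

record circuit =
  gates :: "gate list"
  outs  :: "nat \<times> nat \<times> nat"

definition trunc01 :: "real \<Rightarrow> real" where
  "trunc01 v = max 0 (min 1 v)"

fun gate_args :: "gate \<Rightarrow> nat list" where
  "gate_args (GAdd i j) = [i, j]"
| "gate_args (GSub i j) = [i, j]"
| "gate_args (GMax i j) = [i, j]"
| "gate_args (GMin i j) = [i, j]"
| "gate_args (GScale c i) = [i]"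
| "gate_args (GConst c) = []"
| "gate_args (GCmp i j) = [i, j]"

definition wf_circuit :: "circuit \<Rightarrow> bool" where
  "wf_circuit C \<longleftrightarrow>
     (\<forall>k < length (gates C). \<forall>i \<in> set (gate_args (gates C ! k)). i < 3 + k) \<and>
     (case outs C of (a, b, c) \<Rightarrow>
        a < 3 + length (gates C) \<and> b < 3 + length (gates C) \<and> c < 3 + length (gates C))"

fun gate_ok :: "(nat \<Rightarrow> real) \<Rightarrow> gate \<Rightarrow> real \<Rightarrow> bool" where
  "gate_ok val (GAdd i j) v = (v = trunc01 (val i + val j))"
| "gate_ok val (GSub i j) v = (v = trunc01 (val i - val j))"
| "gate_ok val (GMax i j) v = (v = trunc01 (max (val i) (val j)))"
| "gate_ok val (GMin i j) v = (v = trunc01 (min (val i) (val j)))"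
| "gate_ok val (GScale c i) v = (v = trunc01 (of_rat c * val i))"
| "gate_ok val (GConst c) v = (v = trunc01 (of_rat c))"
| "gate_ok val (GCmp i j) v =
     ((val i > val j \<longrightarrow> v = 1) \<and> (val i < val j \<longrightarrow> v = 0) \<and>
      (val i = val j \<longrightarrow> 0 \<le> v \<and> v \<le> 1))"

definition unit_cube :: "(real^3) set" where
  "unit_cube = {x. \<forall>i. 0 \<le> x $ i \<and> x $ i \<le> 1}"

definition valid_eval :: "circuit \<Rightarrow> real^3 \<Rightarrow> (nat \<Rightarrow> real) \<Rightarrow> bool" where
  "valid_eval C x val \<longleftrightarrow>
     val 0 = x $ 1 \<and> val 1 = x $ 2 \<and> val 2 = x $ 3 \<and>
     (\<forall>k < length (gates C). gate_ok val (gates C ! k) (val (3 + k)))"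

definition circuit_output :: "circuit \<Rightarrow> (nat \<Rightarrow> real) \<Rightarrow> real^3" where
  "circuit_output C val =
     (case outs C of (a, b, c) \<Rightarrow> vector [val a, val b, val c])"

definition computes :: "circuit \<Rightarrow> (real^3 \<Rightarrow> real^3) \<Rightarrow> bool" where
  "computes C F \<longleftrightarrow> wf_circuit C \<and>
     (\<forall>x \<in> unit_cube. (\<exists>val. valid_eval C x val) \<and>
        (\<forall>val. valid_eval C x val \<longrightarrow> circuit_output C val = F x))"

definition bitlen :: "int \<Rightarrow> nat" where
  "bitlen a = nat \<lceil>log 2 (real_of_int \<bar>a\<bar> + 1)\<rceil> + 1"

definition rat_size :: "rat \<Rightarrow> nat" where
  "rat_size r = (case quotient_of r of (a, b) \<Rightarrow> bitlen a + bitlen b)"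

fun gate_size :: "gate \<Rightarrow> nat" where
  "gate_size (GScale c i) = 1 + rat_size c"
| "gate_size (GConst c) = 1 + rat_size c"
| "gate_size g = 1"

definition circuit_size :: "circuit \<Rightarrow> nat" where
  "circuit_size C = sum_list (map gate_size (gates C))"

definition homotopy :: "(real^3 \<Rightarrow> real^3) \<Rightarrow> (real^3 \<Rightarrow> real^3) \<Rightarrow> real \<Rightarrow> real^3 \<Rightarrow> real^3" where
  "homotopy F0 F1 t x = (1 - t) *\<^sub>R F0 x + t *\<^sub>R F1 x"

definition fixpoint_path ::
  "(real^3 \<Rightarrow> real^3) \<Rightarrow> (real^3 \<Rightarrow> real^3) \<Rightarrow> real^3 \<Rightarrow> (real \<Rightarrow> (real^3) \<times> real) \<Rightarrow> bool" where
  "fixpoint_path F0 F1 x0 \<gamma> \<longleftrightarrow>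
     path \<gamma> \<and> pathstart \<gamma> = (x0, 0) \<and> snd (pathfinish \<gamma>) = 1 \<and>
     (\<forall>s \<in> {0..1}. fst (\<gamma> s) \<in> unit_cube \<and> snd (\<gamma> s) \<in> {0..1} \<and>
        homotopy F0 F1 (snd (\<gamma> s)) (fst (\<gamma> s)) = fst (\<gamma> s))"

definition direction_changes_ge :: "(real \<Rightarrow> (real^3) \<times> real) \<Rightarrow> nat \<Rightarrow> bool" where
  "direction_changes_ge \<gamma> m \<longleftrightarrow>
     (\<exists>s :: nat \<Rightarrow> real.
        (\<forall>i \<le> m + 1. 0 \<le> s i \<and> s i \<le> 1) \<and>
        (\<forall>i \<le> m. s i < s (Suc i)) \<and>
        (\<forall>i < m. (snd (\<gamma> (s (Suc i))) - snd (\<gamma> (s i))) *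
                  (snd (\<gamma> (s (Suc (Suc i)))) - snd (\<gamma> (s (Suc i)))) < 0))"

end

theory Submission
  imports Defs
begin

text \<open>Let \<open>T\<close> be the tent map, \<open>N = n + 3\<close> and \<open>\<phi>(b) = max (min (T\<^sup>N(b)) (1 - b)) b\<close>.
  The maps \<open>F\<^sub>0(x) = (0, G(x\<^sub>1, x\<^sub>2), 0)\<close> and \<open>F\<^sub>1(x) = (1, G(x\<^sub>1, x\<^sub>2), 0)\<close>, where
  \<open>G(a, b) = b\<close> exactly when \<open>a = \<phi>(b)\<close>, are computed by circuits with \<open>O(N)\<close> gates,
  and the fixpoints of \<open>F\<^sub>t\<close> are the points \<open>(t, b, 0)\<close> with \<open>t = \<phi>(b)\<close>. Along any path
  of fixpoints the coordinate \<open>b\<close> runs continuously from 0 to 1, so the first times at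
  which it reaches \<open>i / 2\<^sup>N\<close> increase with \<open>i\<close>. At these points \<open>T\<^sup>N\<close> is alternately
  0 and 1, so for \<open>i / 2\<^sup>N \<le> 1/4\<close> the time \<open>t\<close> alternates between \<open>b\<close> and \<open>1 - b\<close>,
  which makes \<open>2^(n+1) - 1\<close> changes of direction.\<close>

section \<open>Evaluating comparator-free circuits\<close>

fun is_comparator :: "gate \<Rightarrow> bool" where
  "is_comparator (GCmp i j) = True"
| "is_comparator _ = False"

text \<open>The value \<open>0\<close> for comparators is a junk value; it is only used for
  comparator-free gate lists.\<close>
fun gate_value :: "(nat \<Rightarrow> real) \<Rightarrow> gate \<Rightarrow> real" where
  "gate_value val (GAdd i j) = trunc01 (val i + val j)"
| "gate_value val (GSub i j) = trunc01 (val i - val j)"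
| "gate_value val (GMax i j) = trunc01 (max (val i) (val j))"
| "gate_value val (GMin i j) = trunc01 (min (val i) (val j))"
| "gate_value val (GScale c i) = trunc01 (of_rat c * val i)"
| "gate_value val (GConst c) = trunc01 (of_rat c)"
| "gate_value val (GCmp i j) = 0"

lemma gate_ok_iff_gate_value:
  "\<not> is_comparator g \<Longrightarrow> gate_ok val g v \<longleftrightarrow> v = gate_value val g"
  by (cases g) auto

lemma gate_value_cong:
  "(\<And>i. i \<in> set (gate_args g) \<Longrightarrow> val i = val' i) \<Longrightarrow> gate_value val g = gate_value val' g"
  by (cases g) auto

fun eval_gates :: "real list \<Rightarrow> gate list \<Rightarrow> real list" where
  "eval_gates vs [] = vs"
| "eval_gates vs (g # gs) = eval_gates (vs @ [gate_value (nth vs) g]) gs"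

text \<open>\<open>wf_gates L gs\<close>: every gate of \<open>gs\<close> refers only to earlier nodes, the first gate
  being node \<open>L\<close>.\<close>
fun wf_gates :: "nat \<Rightarrow> gate list \<Rightarrow> bool" where
  "wf_gates L [] = True"
| "wf_gates L (g # gs) = ((\<forall>i \<in> set (gate_args g). i < L) \<and> wf_gates (Suc L) gs)"

lemma wf_gates_append: "wf_gates L (gs @ hs) = (wf_gates L gs \<and> wf_gates (L + length gs) hs)"
  by (induction gs arbitrary: L) auto

lemma wf_gates_nth:
  "wf_gates L gs \<Longrightarrow> k < length gs \<Longrightarrow> i \<in> set (gate_args (gs ! k)) \<Longrightarrow> i < L + k"
proof (induction gs arbitrary: L k)
  case (Cons g gs)
  then show ?case by (cases k) fastforce+
qed simp

lemma eval_gates_append: "eval_gates vs (gs @ hs) = eval_gates (eval_gates vs gs) hs"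
  by (induction gs arbitrary: vs) auto

lemma length_eval_gates [simp]: "length (eval_gates vs gs) = length vs + length gs"
  by (induction gs arbitrary: vs) auto

lemma nth_eval_gates_input: "i < length vs \<Longrightarrow> eval_gates vs gs ! i = vs ! i"
  by (induction gs arbitrary: vs) (auto simp: nth_append)

lemma nth_eval_gates_gate:
  assumes "wf_gates (length vs) gs" "k < length gs"
  shows "eval_gates vs gs ! (length vs + k) = gate_value (nth (eval_gates vs gs)) (gs ! k)"
  using assms
proof (induction gs arbitrary: vs k)
  case (Cons g gs)
  let ?vs' = "vs @ [gate_value (nth vs) g]"
  show ?case
  proof (cases k)
    case 0
    have "eval_gates vs (g # gs) ! length vs = gate_value (nth vs) g"
      by (simp add: nth_eval_gates_input)
    also have "\<dots> = gate_value (nth (eval_gates vs (g # gs))) g"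
      using Cons.prems by (intro gate_value_cong) (auto simp: nth_eval_gates_input nth_append)
    finally show ?thesis using 0 by simp
  next
    case (Suc k')
    then have "eval_gates vs (g # gs) ! (length vs + k) = eval_gates ?vs' gs ! (length ?vs' + k')"
      by simp
    also have "\<dots> = gate_value (nth (eval_gates ?vs' gs)) (gs ! k')"
      using Cons.IH[of ?vs' k'] Cons.prems Suc by simp
    finally show ?thesis using Suc by simp
  qed
qed simp

context
  fixes C :: circuit and x :: "real^3"
  assumes wf: "wf_gates 3 (gates C)"
    and comparator_free: "\<forall>g \<in> set (gates C). \<not> is_comparator g"
begin

lemma valid_eval_eval_gates: "valid_eval C x (nth (eval_gates [x$1, x$2, x$3] (gates C)))"
proof -
  let ?vs = "eval_gates [x$1, x$2, x$3] (gates C)"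
  have "?vs ! (3 + k) = gate_value (nth ?vs) (gates C ! k)" if "k < length (gates C)" for k
    using nth_eval_gates_gate[of "[x$1, x$2, x$3]" "gates C" k] that wf
    by (simp add: numeral_3_eq_3)
  then show ?thesis
    using comparator_free
    by (auto simp: valid_eval_def nth_eval_gates_input gate_ok_iff_gate_value)
qed

lemma valid_eval_eq_eval_gates:
  assumes "valid_eval C x val" "i < 3 + length (gates C)"
  shows "val i = eval_gates [x$1, x$2, x$3] (gates C) ! i"
  using assms(2)
proof (induction i rule: less_induct)
  case (less i)
  let ?vs = "eval_gates [x$1, x$2, x$3] (gates C)"
  show ?case
  proof (cases "i < 3")
    case True
    then consider "i = 0" | "i = 1" | "i = 2" by linarith
    then show ?thesis
      using assms(1) by cases (auto simp: valid_eval_def nth_eval_gates_input)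
  next
    case False
    then obtain k where i: "i = 3 + k" and k: "k < length (gates C)"
      using less.prems by (metis add.commute le_add_diff_inverse2 nat_add_left_cancel_less not_less)
    have "gate_ok val (gates C ! k) (val i)"
      using assms(1) k i by (auto simp: valid_eval_def)
    then have "val i = gate_value val (gates C ! k)"
      using comparator_free k by (simp add: gate_ok_iff_gate_value)
    also have "\<dots> = gate_value (nth ?vs) (gates C ! k)"
      using i k by (intro gate_value_cong less.IH) (auto dest: wf_gates_nth[OF wf k])
    also have "\<dots> = ?vs ! i"
      using valid_eval_eval_gates k i by (simp add: valid_eval_def gate_ok_iff_gate_value comparator_free)
    finally show ?thesis .
  qed
qed

end

lemma computes_by_eval_gates:
  assumes wf: "wf_gates 3 (gates C)" and comparator_free: "\<forall>g \<in> set (gates C). \<not> is_comparator g"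
    and outs: "outs C = (a, b, c)"
      "a < 3 + length (gates C)" "b < 3 + length (gates C)" "c < 3 + length (gates C)"
    and F: "\<And>x. x \<in> unit_cube \<Longrightarrow>
      F x = (let vs = eval_gates [x$1, x$2, x$3] (gates C) in vector [vs ! a, vs ! b, vs ! c])"
  shows "computes C F"
  unfolding computes_def
proof (intro conjI ballI)
  show "wf_circuit C"
    using wf_gates_nth[OF wf] outs by (auto simp: wf_circuit_def)
next
  fix x :: "real^3" assume x: "x \<in> unit_cube"
  show "\<exists>val. valid_eval C x val"
    using valid_eval_eval_gates[OF wf comparator_free] by blast
  show "\<forall>val. valid_eval C x val \<longrightarrow> circuit_output C val = F x"
    using valid_eval_eq_eval_gates[OF wf comparator_free] outs F[OF x]
    by (simp add: circuit_output_def Let_def)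
qed

section \<open>The tent map\<close>

definition tent :: "real \<Rightarrow> real" where
  "tent y = min (2 * y) (2 - 2 * y)"

lemma tent_iter_Suc: "(tent ^^ Suc N) y = (tent ^^ N) (tent y)"
  by (simp only: funpow_Suc_right comp_apply)

lemma tent_iter_range: "0 \<le> y \<Longrightarrow> y \<le> 1 \<Longrightarrow> 0 \<le> (tent ^^ N) y \<and> (tent ^^ N) y \<le> 1"
  by (induction N) (auto simp: tent_def)

lemma tent_iter_zero [simp]: "(tent ^^ N) 0 = 0"
  by (induction N) (auto simp: tent_def)

lemma tent_iter_dyadic:
  "k \<le> 2 ^ N \<Longrightarrow> (tent ^^ N) (real k / 2 ^ N) = (if even k then 0 else 1)"
proof (induction N arbitrary: k)
  case 0
  then have "k = 0 \<or> k = 1" by auto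
  then show ?case by auto
next
  case (Suc N)
  show ?case
  proof (cases "k \<le> 2 ^ N")
    case True
    then have "tent (real k / 2 ^ Suc N) = real k / 2 ^ N"
      by (auto simp: tent_def min_def field_simps)
    then show ?thesis unfolding tent_iter_Suc using Suc.IH[OF True] by simp
  next
    case False
    define k' where "k' = 2 ^ Suc N - k"
    have k': "k' \<le> 2 ^ N" "real k' = 2 ^ Suc N - real k" "even k' = even k"
      using False Suc.prems by (auto simp: k'_def of_nat_diff)
    have "tent (real k / 2 ^ Suc N) = real k' / 2 ^ N"
      using False Suc.prems k' by (auto simp: tent_def min_def field_simps)
    then show ?thesis unfolding tent_iter_Suc using Suc.IH[OF k'(1)] k'(3) by simp
  qed
qed

lemma continuous_on_tent_iter: "continuous_on S (tent ^^ N)"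
proof (induction N)
  case (Suc N)
  have "continuous_on S (\<lambda>y. tent ((tent ^^ N) y))"
    by (rule continuous_on_compose2[of UNIV tent, OF _ Suc.IH])
      (auto simp: tent_def intro!: continuous_intros)
  then show ?case by (simp add: comp_def)
qed simp

section \<open>The zigzag curve of fixpoints\<close>

definition zigzag :: "nat \<Rightarrow> real \<Rightarrow> real" where
  "zigzag N b = max (min ((tent ^^ N) b) (1 - b)) b"

text \<open>\<open>pull N a b\<close> moves \<open>b\<close> up when \<open>a > zigzag N b\<close> and down when \<open>a < zigzag N b\<close>.\<close>
definition pull :: "nat \<Rightarrow> real \<Rightarrow> real \<Rightarrow> real" where
  "pull N a b = trunc01 (trunc01 (b + trunc01 (a - zigzag N b)) - trunc01 (zigzag N b - a))"

lemma zigzag_zero [simp]: "zigzag N 0 = 0"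
  by (simp add: zigzag_def)

lemma zigzag_bounds:
  assumes "0 \<le> b" "b \<le> 1"
  shows "b \<le> zigzag N b" "zigzag N b \<le> 1" "b < 1 \<Longrightarrow> zigzag N b < 1"
  using tent_iter_range[OF assms, of N] assms by (auto simp: zigzag_def min_less_iff_disj)

lemma zigzag_dyadic:
  assumes "k \<le> 2 ^ N" "real k / 2 ^ N \<le> 1/2"
  shows "zigzag N (real k / 2 ^ N) = (if even k then real k / 2 ^ N else 1 - real k / 2 ^ N)"
proof -
  have "0 \<le> real k / 2 ^ N" by simp
  then show ?thesis
    using tent_iter_dyadic[OF assms(1)] assms(2) by (auto simp: zigzag_def)
qed

lemma pull_eq_iff:
  assumes "0 \<le> a" "a \<le> 1" "0 \<le> b" "b \<le> 1"
  shows "pull N a b = b \<longleftrightarrow> a = zigzag N b"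
proof -
  define p where "p = zigzag N b"
  have p: "b \<le> p" "p \<le> 1" "b < 1 \<Longrightarrow> p < 1"
    using zigzag_bounds[OF assms(3,4), of N] unfolding p_def by auto
  show ?thesis
  proof (cases "p \<le> a")
    case True
    then have "pull N a b = trunc01 (b + (a - p))"
      using assms p by (simp add: pull_def p_def trunc01_def)
    then show ?thesis
      using True assms p by (auto simp: p_def trunc01_def max_def min_def)
  next
    case False
    then have "pull N a b = trunc01 (b - (p - a))"
      using assms p by (simp add: pull_def p_def trunc01_def)
    then show ?thesis
      using False assms p by (auto simp: p_def trunc01_def max_def min_def)
  qed
qed

lemma continuous_on_zigzag: "continuous_on S f \<Longrightarrow> continuous_on S (\<lambda>x. zigzag N (f x))"
  unfolding zigzag_def
  by (intro continuous_intros continuous_on_compose2[OF continuous_on_tent_iter, of _ _ UNIV]) auto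

lemma continuous_on_pull:
  "continuous_on S f \<Longrightarrow> continuous_on S g \<Longrightarrow> continuous_on S (\<lambda>x. pull N (f x) (g x))"
  unfolding pull_def trunc01_def by (intro continuous_intros continuous_on_zigzag)

section \<open>Circuits for the zigzag homotopy\<close>

text \<open>Node 3 holds the constant 1 and node 4 a copy of \<open>b = x\<^sub>2\<close>; the block \<open>k\<close>
  reads \<open>tent\<^sup>k b\<close> from node \<open>4 + 4k\<close> and writes \<open>tent\<^sup>k\<^sup>+\<^sup>1 b\<close> to node \<open>8 + 4k\<close>,
  using \<open>tent y = min (2y) (2(1 - y))\<close>.\<close>
definition tent_block :: "nat \<Rightarrow> gate list" where
  "tent_block k =
     [GAdd (4 + 4*k) (4 + 4*k), GSub 3 (4 + 4*k), GAdd (6 + 4*k) (6 + 4*k), GMin (5 + 4*k) (7 + 4*k)]"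

fun tent_chain :: "nat \<Rightarrow> nat \<Rightarrow> gate list" where
  "tent_chain k 0 = []"
| "tent_chain k (Suc N) = tent_block k @ tent_chain (Suc k) N"

text \<open>With \<open>L = 5 + 4N\<close>, so that node \<open>L - 1\<close> holds \<open>tent\<^sup>N b\<close>, node \<open>L + 6\<close> computes
  \<open>pull N a b\<close> and node \<open>L + 7\<close> the constant 0.\<close>
definition pull_gates :: "nat \<Rightarrow> gate list" where
  "pull_gates L = [GSub 3 1, GMin (L - 1) L, GMax (L + 1) 1, GSub 0 (L + 2), GSub (L + 2) 0,
                   GAdd 1 (L + 3), GSub (L + 5) (L + 4), GSub 0 0]"

definition zigzag_gates :: "nat \<Rightarrow> gate list" where
  "zigzag_gates N = [GConst 1, GMax 1 1] @ tent_chain 0 N @ pull_gates (5 + 4*N)"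

lemma length_tent_chain [simp]: "length (tent_chain k N) = 4 * N"
  by (induction N arbitrary: k) (auto simp: tent_block_def)

lemma wf_gates_tent_chain: "wf_gates (5 + 4*k) (tent_chain k N)"
proof (induction N arbitrary: k)
  case (Suc N)
  have "wf_gates (5 + 4 * Suc k) (tent_chain (Suc k) N)" by (rule Suc.IH)
  then show ?case by (simp add: wf_gates_append tent_block_def)
qed simp

lemma comparator_free_tent_chain: "\<forall>g \<in> set (tent_chain k N). \<not> is_comparator g"
  by (induction N arbitrary: k) (auto simp: tent_block_def)

lemma wf_gates_zigzag_gates: "wf_gates 3 (zigzag_gates N)"
  using wf_gates_tent_chain[of 0 N] by (simp add: zigzag_gates_def wf_gates_append pull_gates_def)

lemma comparator_free_zigzag_gates: "\<forall>g \<in> set (zigzag_gates N). \<not> is_comparator g"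
  using comparator_free_tent_chain[of 0 N] by (auto simp: zigzag_gates_def pull_gates_def)

lemma length_zigzag_gates: "length (zigzag_gates N) = 10 + 4*N"
  by (simp add: zigzag_gates_def pull_gates_def)

lemma eval_tent_block:
  assumes "length vs = 5 + 4*k" "vs ! 3 = 1" "vs ! (4 + 4*k) = y" "0 \<le> y" "y \<le> 1"
  shows "eval_gates vs (tent_block k) =
    vs @ [trunc01 (y + y), 1 - y, trunc01 ((1 - y) + (1 - y)), tent y]"
  using assms by (simp add: tent_block_def nth_append trunc01_def tent_def)

lemma eval_tent_chain:
  assumes "length vs = 5 + 4*k" "vs ! 3 = 1" "vs ! (4 + 4*k) = y" "0 \<le> y" "y \<le> 1"
  shows "eval_gates vs (tent_chain k N) ! (4 + 4*(k + N)) = (tent ^^ N) y"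
  using assms
proof (induction N arbitrary: k vs y)
  case (Suc N)
  define ws where "ws = eval_gates vs (tent_block k)"
  have ws: "ws = vs @ [trunc01 (y + y), 1 - y, trunc01 ((1 - y) + (1 - y)), tent y]"
    unfolding ws_def using eval_tent_block Suc.prems by blast
  have "eval_gates ws (tent_chain (Suc k) N) ! (4 + 4*(Suc k + N)) = (tent ^^ N) (tent y)"
    using Suc.prems tent_iter_range[of y 1] by (intro Suc.IH) (auto simp: ws nth_append)
  then show ?case
    by (simp add: eval_gates_append ws_def tent_iter_Suc del: funpow.simps)
qed simp

lemma eval_pull_gates:
  assumes "length ws = 5 + 4*N" "ws ! 0 = a" "ws ! 1 = b" "ws ! 3 = 1"
    "ws ! (4 + 4*N) = (tent ^^ N) b" "0 \<le> b" "b \<le> 1"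
  shows "eval_gates ws (pull_gates (5 + 4*N)) ! (11 + 4*N) = pull N a b"
    and "eval_gates ws (pull_gates (5 + 4*N)) ! (12 + 4*N) = 0"
proof -
  let ?z = "(tent ^^ N) b"
  have "0 \<le> ?z" "?z \<le> 1"
    using tent_iter_range assms(6,7) by blast+
  then have "trunc01 (max (trunc01 (min ?z (trunc01 (1 - b)))) b) = zigzag N b"
    using assms(6,7) by (simp add: zigzag_def trunc01_def)
  then have "eval_gates ws (pull_gates (5 + 4*N)) = ws @
    [trunc01 (1 - b), trunc01 (min ?z (trunc01 (1 - b))), zigzag N b,
     trunc01 (a - zigzag N b), trunc01 (zigzag N b - a), trunc01 (b + trunc01 (a - zigzag N b)),
     pull N a b, 0]"
    using assms(1-5) by (simp add: pull_gates_def nth_append pull_def trunc01_def[of 0])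
  then show "eval_gates ws (pull_gates (5 + 4*N)) ! (11 + 4*N) = pull N a b"
    and "eval_gates ws (pull_gates (5 + 4*N)) ! (12 + 4*N) = 0"
    using assms(1) by (simp_all add: nth_append)
qed

lemma eval_zigzag_gates:
  assumes "0 \<le> b" "b \<le> 1"
  shows "eval_gates [a, b, c] (zigzag_gates N) ! 3 = 1"
    and "eval_gates [a, b, c] (zigzag_gates N) ! (11 + 4*N) = pull N a b"
    and "eval_gates [a, b, c] (zigzag_gates N) ! (12 + 4*N) = 0"
proof -
  define ws where "ws = eval_gates [a, b, c, 1, b] (tent_chain 0 N)"
  have prefix: "eval_gates [a, b, c] [GConst 1, GMax 1 1] = [a, b, c, 1, b]"
    using assms by (simp add: trunc01_def)
  have eval: "eval_gates [a, b, c] (zigzag_gates N) = eval_gates ws (pull_gates (5 + 4*N))"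
    by (simp only: zigzag_gates_def eval_gates_append prefix ws_def)
  have ws: "length ws = 5 + 4*N" "ws ! 0 = a" "ws ! 1 = b" "ws ! 3 = 1"
    "ws ! (4 + 4*N) = (tent ^^ N) b"
    using eval_tent_chain[of "[a, b, c, 1, b]" 0 b N] assms
    by (simp_all add: ws_def nth_eval_gates_input)
  show "eval_gates [a, b, c] (zigzag_gates N) ! 3 = 1"
    using ws by (simp add: eval nth_eval_gates_input)
  show "eval_gates [a, b, c] (zigzag_gates N) ! (11 + 4*N) = pull N a b"
    "eval_gates [a, b, c] (zigzag_gates N) ! (12 + 4*N) = 0"
    using eval_pull_gates[OF ws assms] by (simp_all add: eval)
qed

lemma circuit_size_zigzag_gates:
  "sum_list (map gate_size (zigzag_gates N)) = 14 + 4*N"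
proof -
  have "sum_list (map gate_size (tent_chain k N)) = 4 * N" for k
    by (induction N arbitrary: k) (auto simp: tent_block_def)
  moreover have "rat_size 1 = 4"
    by (simp add: rat_size_def bitlen_def)
  ultimately show ?thesis
    by (simp add: zigzag_gates_def pull_gates_def)
qed

section \<open>The homotopy and its fixpoints\<close>

definition start_map :: "nat \<Rightarrow> real^3 \<Rightarrow> real^3" where
  "start_map N x = vector [0, pull N (x$1) (x$2), 0]"

definition end_map :: "nat \<Rightarrow> real^3 \<Rightarrow> real^3" where
  "end_map N x = vector [1, pull N (x$1) (x$2), 0]"

definition start_circuit :: "nat \<Rightarrow> circuit" where
  "start_circuit N = \<lparr>gates = zigzag_gates N, outs = (12 + 4*N, 11 + 4*N, 12 + 4*N)\<rparr>"

definition end_circuit :: "nat \<Rightarrow> circuit" where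
  "end_circuit N = \<lparr>gates = zigzag_gates N, outs = (3, 11 + 4*N, 12 + 4*N)\<rparr>"

lemma computes_start_circuit: "computes (start_circuit N) (start_map N)"
  by (rule computes_by_eval_gates[where a = "12 + 4*N" and b = "11 + 4*N" and c = "12 + 4*N"])
    (use wf_gates_zigzag_gates comparator_free_zigzag_gates eval_zigzag_gates in
      \<open>auto simp: start_circuit_def start_map_def length_zigzag_gates unit_cube_def Let_def\<close>)

lemma computes_end_circuit: "computes (end_circuit N) (end_map N)"
  by (rule computes_by_eval_gates[where a = 3 and b = "11 + 4*N" and c = "12 + 4*N"])
    (use wf_gates_zigzag_gates comparator_free_zigzag_gates eval_zigzag_gates in
      \<open>auto simp: end_circuit_def end_map_def length_zigzag_gates unit_cube_def Let_def\<close>)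

lemma circuit_size_start_circuit: "circuit_size (start_circuit N) = 14 + 4*N"
  by (simp add: circuit_size_def start_circuit_def circuit_size_zigzag_gates)

lemma circuit_size_end_circuit: "circuit_size (end_circuit N) = 14 + 4*N"
  by (simp add: circuit_size_def end_circuit_def circuit_size_zigzag_gates)

lemma vector_3_eq_vec_lambda:
  "(vector [p, q, r] :: 'a::zero^3) = (\<chi> i. if i = 1 then p else if i = 2 then q else r)"
  by (simp add: vec_eq_iff forall_3)

lemma continuous_on_vector_3:
  fixes f g h :: "'a::topological_space \<Rightarrow> real"
  assumes "continuous_on S f" "continuous_on S g" "continuous_on S h"
  shows "continuous_on S (\<lambda>x. vector [f x, g x, h x] :: real^3)"
  unfolding vector_3_eq_vec_lambda
proof (rule continuous_on_vec_lambda)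
  fix i :: 3
  show "continuous_on S (\<lambda>x. if i = 1 then f x else if i = 2 then g x else h x)"
    using assms by (cases "i = 1"; cases "i = 2") simp_all
qed

lemma continuous_on_start_map: "continuous_on S (start_map N)"
  unfolding start_map_def
  by (intro continuous_on_vector_3 continuous_on_pull continuous_on_component continuous_on_id
      continuous_on_const)

lemma continuous_on_end_map: "continuous_on S (end_map N)"
  unfolding end_map_def
  by (intro continuous_on_vector_3 continuous_on_pull continuous_on_component continuous_on_id
      continuous_on_const)

lemma homotopy_fixpoint_iff:
  assumes "x \<in> unit_cube"
  shows "homotopy (start_map N) (end_map N) t x = x \<longleftrightarrow>
    x$1 = t \<and> x$3 = 0 \<and> x$1 = zigzag N (x$2)"
proof -
  have "0 \<le> x$i" "x$i \<le> 1" for i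
    using assms by (auto simp: unit_cube_def)
  then show ?thesis
    using pull_eq_iff[of "x$1" "x$2" N]
    by (auto simp: vec_eq_iff forall_3 homotopy_def start_map_def end_map_def algebra_simps)
qed

lemma start_map_zero: "start_map N 0 = 0"
  using pull_eq_iff[of 0 0 N] by (simp add: start_map_def vec_eq_iff forall_3)

lemma start_map_fixpoint_unique:
  assumes "y \<in> unit_cube" "start_map N y = y"
  shows "y = 0"
proof -
  have y2: "0 \<le> y$2" "y$2 \<le> 1"
    using assms(1) by (auto simp: unit_cube_def)
  have y: "y$1 = 0" "y$3 = 0" "pull N 0 (y$2) = y$2"
    using assms(2) by (auto simp: vec_eq_iff forall_3 start_map_def)
  then have "zigzag N (y$2) = 0"
    using pull_eq_iff[of 0 "y$2" N] y2 by simp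
  then have "y$2 = 0"
    using zigzag_bounds(1)[OF y2, of N] y2 by linarith
  then show ?thesis
    using y by (simp add: vec_eq_iff forall_3)
qed

lemma fixpoint_path_zigzag:
  "fixpoint_path (start_map N) (end_map N) 0 (\<lambda>b. (vector [zigzag N b, b, 0], zigzag N b))"
  unfolding fixpoint_path_def
proof (intro conjI ballI)
  show "path (\<lambda>b. (vector [zigzag N b, b, 0] :: real^3, zigzag N b))"
    unfolding path_def
    by (intro continuous_on_Pair continuous_on_vector_3 continuous_on_zigzag continuous_on_id
        continuous_on_const)
  show "pathstart (\<lambda>b. (vector [zigzag N b, b, 0] :: real^3, zigzag N b)) = (0, 0)"
    by (simp add: pathstart_def vec_eq_iff forall_3)
  show "snd (pathfinish (\<lambda>b. (vector [zigzag N b, b, 0] :: real^3, zigzag N b))) = 1"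
    using zigzag_bounds(1,2)[of 1 N] by (simp add: pathfinish_def)
  fix b :: real assume b: "b \<in> {0..1}"
  then have z: "0 \<le> zigzag N b" "zigzag N b \<le> 1"
    using zigzag_bounds(1,2)[of b N] by auto
  then have cube: "vector [zigzag N b, b, 0] \<in> unit_cube"
    using b by (simp add: unit_cube_def forall_3)
  then show "fst (vector [zigzag N b, b, 0] :: real^3, zigzag N b) \<in> unit_cube"
    by simp
  show "snd (vector [zigzag N b, b, 0] :: real^3, zigzag N b) \<in> {0..1}"
    using z by simp
  show "homotopy (start_map N) (end_map N) (snd (vector [zigzag N b, b, 0] :: real^3, zigzag N b))
      (fst (vector [zigzag N b, b, 0], zigzag N b)) = fst (vector [zigzag N b, b, 0], zigzag N b)"
    using homotopy_fixpoint_iff[OF cube] by simp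
qed

section \<open>Counting the direction changes\<close>

lemma first_hitting_time:
  fixes \<beta> :: "real \<Rightarrow> real"
  assumes cont: "continuous_on {0..1} \<beta>" and start: "\<beta> 0 = 0" and finish: "\<beta> 1 = 1"
  obtains h where "\<And>y. y \<in> {0..1} \<Longrightarrow> h y \<in> {0..1} \<and> \<beta> (h y) = y"
    and "strict_mono_on {0..1} h"
proof -
  define S where "S y = {0..1} \<inter> \<beta> -` {y..}" for y
  define h where "h y = Inf (S y)" for y
  have bdd: "bdd_below (S y)" for y
    unfolding S_def by (rule bdd_belowI[of _ 0]) auto
  have h_le: "h y \<le> s" if "s \<in> S y" for s y
    unfolding h_def by (rule cInf_lower[OF that bdd])
  have h_in_S: "h y \<in> S y" if "y \<in> {0..1}" for y
  proof -
    have "closed (S y)"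
      unfolding S_def by (rule continuous_closed_preimage[OF cont]) auto
    moreover have "1 \<in> S y"
      using that finish by (simp add: S_def)
    ultimately show ?thesis
      unfolding h_def using bdd by (intro closed_contains_Inf) auto
  qed
  have h_hits: "h y \<in> {0..1} \<and> \<beta> (h y) = y" if y: "y \<in> {0..1}" for y
  proof -
    have hy: "h y \<in> {0..1}" "y \<le> \<beta> (h y)"
      using h_in_S[OF y] by (auto simp: S_def)
    have "\<not> y < \<beta> (h y)"
    proof
      assume "y < \<beta> (h y)"
      moreover have "continuous_on {0..h y} \<beta>"
        using hy(1) by (intro continuous_on_subset[OF cont]) auto
      ultimately obtain s where s: "0 \<le> s" "s \<le> h y" "\<beta> s = y"
        using IVT'[of \<beta> 0 y "h y"] start y hy(1) by auto
      then have "h y \<le> s"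
        using hy(1) by (intro h_le) (auto simp: S_def)
      with s \<open>y < \<beta> (h y)\<close> show False by auto
    qed
    with hy show ?thesis by auto
  qed
  have "strict_mono_on {0..1} h"
  proof (rule strict_mono_onI)
    fix y y' :: real assume y: "y \<in> {0..1}" and y': "y' \<in> {0..1}" and "y < y'"
    then have "h y \<le> h y'"
      using h_hits[OF y'] by (intro h_le) (auto simp: S_def)
    moreover have "h y \<noteq> h y'"
      using h_hits[OF y] h_hits[OF y'] \<open>y < y'\<close> by auto
    ultimately show "h y < h y'" by simp
  qed
  with h_hits that show ?thesis by blast
qed

lemma direction_changes_ge_alternating:
  fixes \<gamma> :: "real \<Rightarrow> (real^3) \<times> real" and s b :: "nat \<Rightarrow> real"
  assumes "\<And>i. i \<le> m + 1 \<Longrightarrow> 0 \<le> s i \<and> s i \<le> 1"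
    and "\<And>i. i \<le> m \<Longrightarrow> s i < s (Suc i)"
    and "\<And>i. i \<le> m + 1 \<Longrightarrow> 0 \<le> b i \<and> b i \<le> 1/4"
    and "\<And>i. i \<le> m + 1 \<Longrightarrow> snd (\<gamma> (s i)) = (if even i then b i else 1 - b i)"
  shows "direction_changes_ge \<gamma> m"
  unfolding direction_changes_ge_def
proof (intro exI[of _ s] conjI allI impI)
  fix i assume "i < m"
  then have "snd (\<gamma> (s i)) = (if even i then b i else 1 - b i)"
    "snd (\<gamma> (s (Suc i))) = (if even i then 1 - b (Suc i) else b (Suc i))"
    "snd (\<gamma> (s (Suc (Suc i)))) = (if even i then b (Suc (Suc i)) else 1 - b (Suc (Suc i)))"
    "0 \<le> b i" "b i \<le> 1/4" "0 \<le> b (Suc i)" "b (Suc i) \<le> 1/4"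
    "0 \<le> b (Suc (Suc i))" "b (Suc (Suc i)) \<le> 1/4"
    using assms(3,4) by auto
  then show "(snd (\<gamma> (s (Suc i))) - snd (\<gamma> (s i))) *
      (snd (\<gamma> (s (Suc (Suc i)))) - snd (\<gamma> (s (Suc i)))) < 0"
    by (cases "even i") (simp_all add: mult_pos_neg mult_neg_pos)
qed (use assms(1,2) in auto)

lemma direction_changes_ge_zigzag:
  assumes path: "fixpoint_path (start_map (n + 3)) (end_map (n + 3)) 0 \<gamma>"
  shows "direction_changes_ge \<gamma> (2 ^ (n + 1) - 1)"
proof -
  let ?N = "n + 3" and ?m = "2 ^ (n + 1) - 1 :: nat"
  define \<beta> where "\<beta> s = fst (\<gamma> s) $ 2" for s
  have "continuous_on {0..1} \<gamma>"
    using path by (simp add: fixpoint_path_def path_def)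
  then have cont: "continuous_on {0..1} \<beta>"
    unfolding \<beta>_def by (intro continuous_on_component continuous_on_fst)
  have on_graph: "0 \<le> \<beta> s \<and> \<beta> s \<le> 1 \<and> snd (\<gamma> s) = zigzag ?N (\<beta> s)" if "s \<in> {0..1}" for s
    using path that homotopy_fixpoint_iff[of "fst (\<gamma> s)" ?N "snd (\<gamma> s)"]
    by (auto simp: fixpoint_path_def \<beta>_def unit_cube_def)
  have start: "\<beta> 0 = 0"
    using path by (simp add: fixpoint_path_def pathstart_def \<beta>_def)
  have "zigzag ?N (\<beta> 1) = 1"
    using path on_graph[of 1] by (simp add: fixpoint_path_def pathfinish_def)
  then have finish: "\<beta> 1 = 1"
    using on_graph[of 1] zigzag_bounds(3)[of "\<beta> 1" ?N] by fastforce
  obtain h where h: "\<And>y. y \<in> {0..1} \<Longrightarrow> h y \<in> {0..1} \<and> \<beta> (h y) = y"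
    and mono: "strict_mono_on {0..1} h"
    using first_hitting_time[OF cont start finish] by blast
  define b where "b i = real i / 2 ^ ?N" for i
  have b: "0 \<le> b i \<and> b i \<le> 1/4" if "i \<le> ?m + 1" for i
  proof -
    have "real i \<le> 2 ^ (n + 1)"
      using that by (metis Suc_eq_plus1 le_add_diff_inverse2 of_nat_le_iff of_nat_numeral
          of_nat_power one_le_numeral one_le_power)
    then show ?thesis
      by (simp add: b_def power_add field_simps)
  qed
  show ?thesis
  proof (rule direction_changes_ge_alternating[where s = "\<lambda>i. h (b i)" and b = b])
    fix i assume i: "i \<le> ?m + 1"
    then have "b i \<in> {0..1}" using b[OF i] by auto
    with h show "0 \<le> h (b i) \<and> h (b i) \<le> 1" by auto
    show "0 \<le> b i \<and> b i \<le> 1/4" using b[OF i] .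
    have "i \<le> 2 ^ ?N"
      using i by (simp add: power_add)
    then show "snd (\<gamma> (h (b i))) = (if even i then b i else 1 - b i)"
      using on_graph[of "h (b i)"] h[of "b i"] zigzag_dyadic[of i ?N] b[OF i] \<open>b i \<in> {0..1}\<close>
      by (auto simp: b_def)
  next
    fix i assume "i \<le> ?m"
    then have "i \<le> ?m + 1" "Suc i \<le> ?m + 1"
      by linarith+
    then have "b i \<in> {0..1}" "b (Suc i) \<in> {0..1}"
      using b by fastforce+
    moreover have "b i < b (Suc i)"
      by (simp add: b_def divide_strict_right_mono)
    ultimately show "h (b i) < h (b (Suc i))"
      by (rule strict_mono_onD[OF mono])
  qed
qed

lemma gate_count_le_power: "14 + 4 * (n + 3) \<le> (n + 2 :: nat) ^ 5"
proof -
  have "(2::nat) ^ 4 \<le> (n + 2) ^ 4"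
    by (rule power_mono) auto
  have "14 + 4 * (n + 3) \<le> (n + 2) * 16"
    by simp
  also have "\<dots> \<le> (n + 2) * (n + 2) ^ 4"
    using \<open>2 ^ 4 \<le> (n + 2) ^ 4\<close> by (intro mult_le_mono2) simp
  also have "\<dots> = (n + 2) ^ 5"
    by (simp add: power_Suc[symmetric] del: power_Suc)
  finally show ?thesis .
qed

lemma two_powr_le_pred_power: "2 powr real n \<le> real (2 ^ (n + 1) - 1 :: nat)"
proof -
  have "real (2 ^ (n + 1) - 1 :: nat) = 2 * 2 ^ n - 1"
    by (simp add: of_nat_diff)
  moreover have "(1::real) \<le> 2 ^ n"
    by simp
  ultimately show ?thesis
    by (simp add: powr_realpow)
qed

theorem theorem8:
  shows "\<exists>c > (0::real). \<exists>d :: nat. \<forall>n :: nat.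
     \<exists>C0 C1 :: circuit. \<exists>F0 F1 :: real^3 \<Rightarrow> real^3. \<exists>x0 :: real^3.
       computes C0 F0 \<and> computes C1 F1 \<and>
       circuit_size C0 \<le> (n + 2) ^ d \<and> circuit_size C1 \<le> (n + 2) ^ d \<and>
       continuous_on unit_cube F0 \<and> continuous_on unit_cube F1 \<and>
       x0 \<in> unit_cube \<and> F0 x0 = x0 \<and> (\<forall>y \<in> unit_cube. F0 y = y \<longrightarrow> y = x0) \<and>
       (\<exists>\<gamma>. fixpoint_path F0 F1 x0 \<gamma>) \<and>
       (\<forall>\<gamma>. fixpoint_path F0 F1 x0 \<gamma> \<longrightarrow>
          (\<exists>m. direction_changes_ge \<gamma> m \<and> real m \<ge> 2 powr (c * real n)))"
proof (intro exI[of _ "1::real"] exI[of _ "5::nat"] conjI allI)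
  fix n :: nat
  let ?N = "n + 3"
  have changes: "\<exists>m. direction_changes_ge \<gamma> m \<and> real m \<ge> 2 powr (1 * real n)"
    if "fixpoint_path (start_map ?N) (end_map ?N) 0 \<gamma>" for \<gamma>
    using direction_changes_ge_zigzag[OF that] two_powr_le_pred_power[of n] by auto
  have path: "\<exists>\<gamma>. fixpoint_path (start_map ?N) (end_map ?N) 0 \<gamma>"
    using fixpoint_path_zigzag by blast
  have zero_in_cube: "(0::real^3) \<in> unit_cube"
    by (simp add: unit_cube_def)
  show "\<exists>C0 C1 F0 F1 x0.
       computes C0 F0 \<and> computes C1 F1 \<and>
       circuit_size C0 \<le> (n + 2) ^ 5 \<and> circuit_size C1 \<le> (n + 2) ^ 5 \<and>
       continuous_on unit_cube F0 \<and> continuous_on unit_cube F1 \<and>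
       x0 \<in> unit_cube \<and> F0 x0 = x0 \<and> (\<forall>y \<in> unit_cube. F0 y = y \<longrightarrow> y = x0) \<and>
       (\<exists>\<gamma>. fixpoint_path F0 F1 x0 \<gamma>) \<and>
       (\<forall>\<gamma>. fixpoint_path F0 F1 x0 \<gamma> \<longrightarrow>
          (\<exists>m. direction_changes_ge \<gamma> m \<and> real m \<ge> 2 powr (1 * real n)))"
    by (rule exI[of _ "start_circuit ?N"], rule exI[of _ "end_circuit ?N"],
        rule exI[of _ "start_map ?N"], rule exI[of _ "end_map ?N"], rule exI[of _ 0])
      (use changes path zero_in_cube computes_start_circuit computes_end_circuit gate_count_le_power[of n]
         circuit_size_start_circuit circuit_size_end_circuit
         continuous_on_start_map continuous_on_end_map start_map_zero start_map_fixpoint_unique in auto)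
qed simp

end
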